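(* Assume that the solvency sets $(\mathbf{K}_t)_{t=0,\dots,T}$ are cones. (i) (NA2) holds if and only if $\Xi_t^0=L^0(\mathbf{K}_t,\mathcal{F}_t)$ for all $t\le T$. (ii) (NA2) holds if and only if $\mathrm{m}(\mathbf{K}_t|\mathcal{F}_{t-1})\subseteq\mathbf{K}_{t-1}$ a.s. for $t=1,\dots,T$. (iii) If the solvency sets are strictly proper, then (NA2) implies (SNR), i.e. $\hat\Xi_t^0\cap L^0(-\mathbf{K}_t,\mathcal{F}_t)\subseteq L^0(\mathbf{K}_t^0,\mathcal{F}_t)$ for all $t$.
   Context: $(\Omega,\mathcal{F},(\mathcal{F}_t)_{t=0,\dots,T},\mathbb{P})$ filtered complete probability space, $\mathcal{F}_0$ trivial. $L^0(\Gamma,\mathcal{F}_t)$: $\mathcal{F}_t$-measurable random vectors a.s. in $\Gamma$. Solvency sets: $\mathbf{K}_t$ is an $\mathcal{F}_t$-measurable random closed convex set in $\mathbb{R}^d$ with $\mathbf{K}_t+\mathbb{R}^d_+\subseteq\mathbf{K}_t$ and $\mathbf{K}_t\cap\mathbb{R}^d_-=\{0\}$ a.s.; $\mathbf{K}_t^0=\bigcap_{c\in\mathbb{Q}\setminus\{0\}}c\mathbf{K}_t$; strictly proper: $\mathbf{K}_t\cap(-\mathbf{K}_t)=\{0\}$ a.s. $\mathsf{A}_{t,s}=\sum_{u=t}^sL^0(-\mathbf{K}_u,\mathcal{F}_u)$. $\Xi_T^0=L^0(\mathbf{K}_T,\mathcal{F}_T)$, $\Xi_t^0=L^0(\mathbf{K}_t,\mathcal{F}_t)+(\Xi_{t+1}^0\cap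 L^0(\mathbb{R}^d,\mathcal{F}_t))$ for $t<T$ (equivalently $\Xi_t^0=(-\mathsf{A}_{t,T})\cap L^0(\mathbb{R}^d,\mathcal{F}_t)$); $\hat\Xi_T^0=\Xi_T^0$, $\hat\Xi_t^0=L^0(\mathbf{K}_t,\mathcal{F}_t)+\mathrm{cl}_0(\Xi_{t+1}^0\cap L^0(\mathbb{R}^d,\mathcal{F}_t))$ for $t<T$ ($\mathrm{cl}_0$: closure in probability). (NA2) (no arbitrage of the second kind): for every $t=0,\dots,T$ and $\eta_t\in L^0(\mathbb{R}^d,\mathcal{F}_t)$, if $(\eta_t+\mathsf{A}_{t,T})\cap L^0(\mathbf{K}_T,\mathcal{F}_T)\neq\emptyset$ then $\eta_t\in L^0(\mathbf{K}_t,\mathcal{F}_t)$. $\mathrm{m}(\mathbf{X}|\mathcal{F}_{t-1})$ is the largest $\mathcal{F}_{t-1}$-measurable random set a.s. contained in $\mathbf{X}$. *)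

theory Defs
  imports "HOL-Probability.Probability"
begin

(* Omega :: 'a, the filtered probability space is (M, F 0, ..., F T); vectors in R^d are real^'d *)

definition nonneg_orthant :: "(real^'d) set" where
  "nonneg_orthant = {x. \<forall>i. 0 \<le> x $ i}"

definition nonpos_orthant :: "(real^'d) set" where
  "nonpos_orthant = {x. \<forall>i. x $ i \<le> 0}"

definition effros_measurable :: "'a measure \<Rightarrow> ('a \<Rightarrow> ('b::topological_space) set) \<Rightarrow> bool" where
  "effros_measurable H X \<longleftrightarrow>
     (\<forall>U. open U \<longrightarrow> {\<omega> \<in> space H. X \<omega> \<inter> U \<noteq> {}} \<in> sets H)"

definition random_closed_set :: "'a measure \<Rightarrow> ('a \<Rightarrow> ('b::topological_space) set) \<Rightarrow> bool" where
  "random_closed_set H X \<longleftrightarrow> (\<forall>\<omega>\<in>space H. closed (X \<omega>)) \<and> effros_measurable H X"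

definition L0 :: "'a measure \<Rightarrow> 'a measure \<Rightarrow> ('a \<Rightarrow> ('b::topological_space) set) \<Rightarrow> ('a \<Rightarrow> 'b) set" where
  "L0 M H G = {\<xi> \<in> borel_measurable H. AE \<omega> in M. \<xi> \<omega> \<in> G \<omega>}"

definition negset :: "('a \<Rightarrow> ('b::ab_group_add) set) \<Rightarrow> 'a \<Rightarrow> 'b set" where
  "negset G = (\<lambda>\<omega>. uminus ` G \<omega>)"

definition rv_plus :: "('a \<Rightarrow> 'b::plus) set \<Rightarrow> ('a \<Rightarrow> 'b) set \<Rightarrow> ('a \<Rightarrow> 'b) set" where
  "rv_plus A B = {(\<lambda>\<omega>. f \<omega> + g \<omega>) | f g. f \<in> A \<and> g \<in> B}"

definition Aset :: "'a measure \<Rightarrow> (nat \<Rightarrow> 'a measure) \<Rightarrow> (nat \<Rightarrow> 'a \<Rightarrow> (real^'d) set)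
     \<Rightarrow> nat \<Rightarrow> nat \<Rightarrow> ('a \<Rightarrow> real^'d) set" where
  "Aset M F K t s = {(\<lambda>\<omega>. \<Sum>u\<in>{t..s}. \<xi> u \<omega>) | \<xi>.
       \<forall>u\<in>{t..s}. \<xi> u \<in> L0 M (F u) (negset (K u))}"

definition Xi0 :: "'a measure \<Rightarrow> (nat \<Rightarrow> 'a measure) \<Rightarrow> (nat \<Rightarrow> 'a \<Rightarrow> (real^'d) set)
     \<Rightarrow> nat \<Rightarrow> nat \<Rightarrow> ('a \<Rightarrow> real^'d) set" where
  "Xi0 M F K T t = (\<lambda>f \<omega>. - f \<omega>) ` Aset M F K t T \<inter> L0 M (F t) (\<lambda>_. UNIV)"

definition conv_in_prob :: "'a measure \<Rightarrow> (nat \<Rightarrow> 'a \<Rightarrow> 'b::metric_space) \<Rightarrow> ('a \<Rightarrow> 'b) \<Rightarrow> bool" where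
  "conv_in_prob M X Y \<longleftrightarrow>
     (\<forall>\<epsilon>>0. (\<lambda>n. measure M {\<omega> \<in> space M. \<epsilon> < dist (X n \<omega>) (Y \<omega>)}) \<longlonglongrightarrow> 0)"

definition cl0 :: "'a measure \<Rightarrow> ('a \<Rightarrow> 'b::metric_space) set \<Rightarrow> ('a \<Rightarrow> 'b) set" where
  "cl0 M S = {Y \<in> borel_measurable M. \<exists>X. (\<forall>n. X n \<in> S) \<and> conv_in_prob M X Y}"

definition Xihat0 :: "'a measure \<Rightarrow> (nat \<Rightarrow> 'a measure) \<Rightarrow> (nat \<Rightarrow> 'a \<Rightarrow> (real^'d) set)
     \<Rightarrow> nat \<Rightarrow> nat \<Rightarrow> ('a \<Rightarrow> real^'d) set" where
  "Xihat0 M F K T t =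
     (if T \<le> t then Xi0 M F K T T
      else rv_plus (L0 M (F t) (K t)) (cl0 M (Xi0 M F K T (Suc t) \<inter> L0 M (F t) (\<lambda>_. UNIV))))"

definition Kzero :: "('a \<Rightarrow> (real^'d) set) \<Rightarrow> 'a \<Rightarrow> (real^'d) set" where
  "Kzero K = (\<lambda>\<omega>. \<Inter>c\<in>\<rat> - {0}. (\<lambda>x. c *\<^sub>R x) ` K \<omega>)"

definition strictly_proper :: "'a measure \<Rightarrow> (nat \<Rightarrow> 'a \<Rightarrow> (real^'d) set) \<Rightarrow> nat \<Rightarrow> bool" where
  "strictly_proper M K T \<longleftrightarrow> (\<forall>t\<le>T. AE \<omega> in M. K t \<omega> \<inter> uminus ` K t \<omega> = {0})"

definition NA2 :: "'a measure \<Rightarrow> (nat \<Rightarrow> 'a measure) \<Rightarrow> (nat \<Rightarrow> 'a \<Rightarrow> (real^'d) set) \<Rightarrow> nat \<Rightarrow> bool" where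
  "NA2 M F K T \<longleftrightarrow>
     (\<forall>t\<le>T. \<forall>\<eta> \<in> L0 M (F t) (\<lambda>_. UNIV).
        (\<exists>a \<in> Aset M F K t T. (\<lambda>\<omega>. \<eta> \<omega> + a \<omega>) \<in> L0 M (F T) (K T))
        \<longrightarrow> \<eta> \<in> L0 M (F t) (K t))"

definition is_cond_core :: "'a measure \<Rightarrow> 'a measure \<Rightarrow> ('a \<Rightarrow> ('b::topological_space) set)
     \<Rightarrow> ('a \<Rightarrow> 'b set) \<Rightarrow> bool" where
  "is_cond_core M H X Y \<longleftrightarrow>
     random_closed_set H Y \<and> (AE \<omega> in M. Y \<omega> \<subseteq> X \<omega>) \<and>
     (\<forall>Z. random_closed_set H Z \<and> (AE \<omega> in M. Z \<omega> \<subseteq> X \<omega>) \<longrightarrow> (AE \<omega> in M. Z \<omega> \<subseteq> Y \<omega>))"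

definition market_setting :: "'a measure \<Rightarrow> (nat \<Rightarrow> 'a measure) \<Rightarrow> (nat \<Rightarrow> 'a \<Rightarrow> (real^'d) set) \<Rightarrow> nat \<Rightarrow> bool" where
  "market_setting M F K T \<longleftrightarrow>
     prob_space M \<and> complete_measure M \<and>
     (\<forall>t\<le>T. space (F t) = space M \<and> sets (F t) \<subseteq> sets M) \<and>
     (\<forall>t<T. sets (F t) \<subseteq> sets (F (Suc t))) \<and>
     null_sets M \<subseteq> sets (F 0) \<and>
     (\<forall>A\<in>sets (F 0). measure M A = 0 \<or> measure M A = 1) \<and>
     (\<forall>t\<le>T. random_closed_set (F t) (K t) \<and> (\<forall>\<omega>\<in>space M. convex (K t \<omega>)) \<and>
        (AE \<omega> in M. \<forall>x\<in>K t \<omega>. \<forall>y\<in>nonneg_orthant. x + y \<in> K t \<omega>) \<and>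
        (AE \<omega> in M. K t \<omega> \<inter> nonpos_orthant = {0}))"

end

theory Submission
  imports Defs
begin

text \<open>
  For convex cones each \<open>K\<^sub>t \<omega>\<close> is closed under addition, so \<open>A\<^bsub>t,T\<^esub>\<close> absorbs every
  position that is solvent at time \<open>T\<close>. Hence (NA2) is equivalent to
  \<open>\<Xi>\<^sub>t\<^sup>0 = L\<^sup>0(K\<^sub>t, \<F>\<^sub>t)\<close> and, by backward induction, to the one-step condition
  \<open>L\<^sup>0(K\<^bsub>t+1\<^esub>, \<F>\<^sub>t) \<subseteq> L\<^sup>0(K\<^sub>t, \<F>\<^sub>t)\<close>. This condition on selectors transfers to the
  conditional core \<open>m(K\<^bsub>t+1\<^esub> | \<F>\<^sub>t)\<close>, which exists as the closed union of a sequence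
  maximising the hitting probabilities of a countable base: singletons give one direction;
  for the other, the countably many selectors \<open>d + r\<one>\<close> (\<open>d\<close> in a dense set) taken where
  the core meets the ball \<open>B(d, r)\<close> lie in \<open>K\<^bsub>t+1\<^esub>\<close> because \<open>K\<^bsub>t+1\<^esub> + \<real>\<^sup>d\<^sub>+ \<subseteq> K\<^bsub>t+1\<^esub>\<close>,
  and they approximate every point of the core. For (iii), a limit in probability of
  elements of \<open>\<Xi>\<^bsub>t+1\<^esub>\<^sup>0 \<subseteq> L\<^sup>0(K\<^bsub>t+1\<^esub>)\<close> stays a.s. in the closed set \<open>K\<^bsub>t+1\<^esub>\<close>, the
  one-step condition moves it into \<open>K\<^sub>t\<close>, and for a cone \<open>K\<^sub>t \<inter> -K\<^sub>t \<subseteq> K\<^sub>t\<^sup>0\<close>.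
\<close>

lemma cone_mem_scaleR_image_if_neg_mem:
  assumes "cone S" "x \<in> S" "- x \<in> S" "c \<noteq> 0"
  shows "x \<in> (\<lambda>y. c *\<^sub>R y) ` S"
proof -
  have "(1 / c) *\<^sub>R x \<in> S"
  proof (cases "c > 0")
    case True
    then show ?thesis using assms(1,2) by (simp add: cone_def)
  next
    case False
    then have "- 1 / c \<ge> 0" using assms(4) by simp
    then have "(- 1 / c) *\<^sub>R (- x) \<in> S" using assms(1,3) unfolding cone_def by blast
    then show ?thesis by simp
  qed
  moreover have "x = c *\<^sub>R ((1 / c) *\<^sub>R x)" using assms(4) by simp
  ultimately show ?thesis by blast
qed

lemma INT_null_if_measure_tendsto_0:
  assumes "finite_measure M" "\<And>n. D n \<in> sets M" "(\<lambda>n. measure M (D n)) \<longlonglongrightarrow> 0"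
  shows "(\<Inter>n. D n) \<in> null_sets M"
proof -
  interpret finite_measure M by fact
  have "measure M (\<Inter>n. D n) \<le> measure M (D n)" for n
    using assms(2) by (intro finite_measure_mono) auto
  then have "measure M (\<Inter>n. D n) \<le> 0"
    by (intro LIMSEQ_le_const[OF assms(3)]) auto
  then show ?thesis
    using assms(2) by (auto simp: emeasure_eq_measure measure_le_0_iff)
qed

lemma AE_mem_if_conv_in_prob:
  fixes X :: "nat \<Rightarrow> 'a \<Rightarrow> 'b::{metric_space, second_countable_topology}"
  assumes "prob_space M" "conv_in_prob M X Y"
    and measurable: "Y \<in> borel_measurable M" "\<And>n. X n \<in> borel_measurable M"
    and mem: "\<And>n. AE \<omega> in M. X n \<omega> \<in> S \<omega>"
    and closed: "\<And>\<omega>. \<omega> \<in> space M \<Longrightarrow> closed (S \<omega>)"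
  shows "AE \<omega> in M. Y \<omega> \<in> S \<omega>"
proof -
  interpret prob_space M by fact
  define D where "D m n = {\<omega> \<in> space M. 1 / real (Suc m) < dist (X n \<omega>) (Y \<omega>)}" for m n
  have "(\<Inter>n. D m n) \<in> null_sets M" for m
    using assms(2) measurable unfolding conv_in_prob_def D_def
    by (intro INT_null_if_measure_tendsto_0) auto
  then have "AE \<omega> in M. \<forall>m. \<omega> \<notin> (\<Inter>n. D m n)"
    unfolding AE_all_countable by (blast intro: AE_not_in)
  moreover have "AE \<omega> in M. \<forall>n. X n \<omega> \<in> S \<omega>"
    using mem by (simp add: AE_all_countable)
  ultimately show ?thesis
    using AE_space
  proof eventually_elim
    case (elim \<omega>)
    have "\<exists>x\<in>S \<omega>. dist x (Y \<omega>) < e" if "e > 0" for e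
    proof -
      obtain m where "1 / real (Suc m) < e" using \<open>e > 0\<close> nat_approx_posE by blast
      moreover obtain n where "\<omega> \<notin> D m n" using elim by blast
      then have "dist (X n \<omega>) (Y \<omega>) \<le> 1 / real (Suc m)" using elim unfolding D_def by auto
      ultimately show ?thesis using elim by (intro bexI[of _ "X n \<omega>"]) auto
    qed
    then show ?case using closed_approachable[OF closed] elim by blast
  qed
qed

section \<open>Random closed sets and conditional cores\<close>

lemma random_closed_set_singleton:
  assumes "\<xi> \<in> borel_measurable H"
  shows "random_closed_set H (\<lambda>\<omega>. {\<xi> \<omega> :: 'b::metric_space})"
  unfolding random_closed_set_def effros_measurable_def
proof (intro conjI ballI allI impI)
  fix U :: "'b set" assume "open U"
  then have "\<xi> -` U \<inter> space H \<in> sets H" using measurable_sets[OF assms] by auto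
  moreover have "{\<omega> \<in> space H. {\<xi> \<omega>} \<inter> U \<noteq> {}} = \<xi> -` U \<inter> space H" by auto
  ultimately show "{\<omega> \<in> space H. {\<xi> \<omega>} \<inter> U \<noteq> {}} \<in> sets H" by simp
qed simp

definition hitting_event :: "'a measure \<Rightarrow> ('a \<Rightarrow> 'b set) \<Rightarrow> 'b set \<Rightarrow> 'a set" where
  "hitting_event M Z U = {\<omega> \<in> space M. Z \<omega> \<inter> U \<noteq> {}}"

lemma hitting_event_closure_UN:
  assumes "open U"
  shows "hitting_event M (\<lambda>\<omega>. closure (\<Union>i\<in>I. Z i \<omega>)) U = (\<Union>i\<in>I. hitting_event M (Z i) U)"
  using open_Int_closure_eq_empty[OF assms] unfolding hitting_event_def by (auto simp: Int_commute)

lemma random_closed_set_closure_UN: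
  fixes Z :: "'i \<Rightarrow> 'a \<Rightarrow> 'b::topological_space set"
  assumes "countable I" "\<And>i. i \<in> I \<Longrightarrow> random_closed_set H (Z i)"
  shows "random_closed_set H (\<lambda>\<omega>. closure (\<Union>i\<in>I. Z i \<omega>))"
  unfolding random_closed_set_def effros_measurable_def
proof (intro conjI ballI allI impI)
  fix U :: "'b set" assume U: "open U"
  have "{\<omega> \<in> space H. closure (\<Union>i\<in>I. Z i \<omega>) \<inter> U \<noteq> {}}
      = (\<Union>i\<in>I. {\<omega> \<in> space H. Z i \<omega> \<inter> U \<noteq> {}})"
    using hitting_event_closure_UN[OF U, of H] unfolding hitting_event_def .
  moreover have "(\<Union>i\<in>I. {\<omega> \<in> space H. Z i \<omega> \<inter> U \<noteq> {}}) \<in> sets H"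
    using assms U unfolding random_closed_set_def effros_measurable_def by blast
  ultimately show "{\<omega> \<in> space H. closure (\<Union>i\<in>I. Z i \<omega>) \<inter> U \<noteq> {}} \<in> sets H" by simp
qed simp

definition random_closed_subsets ::
    "'a measure \<Rightarrow> 'a measure \<Rightarrow> ('a \<Rightarrow> 'b::topological_space set) \<Rightarrow> ('a \<Rightarrow> 'b set) set" where
  "random_closed_subsets M H X = {Z. random_closed_set H Z \<and> (AE \<omega> in M. Z \<omega> \<subseteq> X \<omega>)}"

lemma is_cond_core_iff:
  "is_cond_core M H X Y \<longleftrightarrow> Y \<in> random_closed_subsets M H X \<and>
    (\<forall>Z\<in>random_closed_subsets M H X. AE \<omega> in M. Z \<omega> \<subseteq> Y \<omega>)"
  unfolding is_cond_core_def random_closed_subsets_def by blast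

lemma hitting_event_in_sets:
  assumes "subalgebra M H" "random_closed_set H Z" "open U"
  shows "hitting_event M Z U \<in> sets M"
proof -
  have "hitting_event M Z U \<in> sets H"
    using assms unfolding hitting_event_def random_closed_set_def effros_measurable_def subalgebra_def
    by simp
  then show ?thesis using assms(1) unfolding subalgebra_def by blast
qed

lemma closure_UN_in_random_closed_subsets:
  fixes Z :: "'i \<Rightarrow> 'a \<Rightarrow> 'b::topological_space set"
  assumes I: "countable I" and Z: "\<And>i. i \<in> I \<Longrightarrow> Z i \<in> random_closed_subsets M H X"
    and closed: "\<And>\<omega>. \<omega> \<in> space M \<Longrightarrow> closed (X \<omega>)"
  shows "(\<lambda>\<omega>. closure (\<Union>i\<in>I. Z i \<omega>)) \<in> random_closed_subsets M H X"
proof -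
  have "AE \<omega> in M. \<forall>i\<in>I. Z i \<omega> \<subseteq> X \<omega>"
    using Z unfolding random_closed_subsets_def AE_ball_countable[OF I] by blast
  then have "AE \<omega> in M. closure (\<Union>i\<in>I. Z i \<omega>) \<subseteq> X \<omega>"
    using AE_space by eventually_elim (simp add: closure_minimal closed UN_least)
  then show ?thesis
    using random_closed_set_closure_UN[OF I] Z unfolding random_closed_subsets_def by blast
qed

lemma AE_subset_if_hitting_events_null:
  fixes Y Z :: "'a \<Rightarrow> 'b::topological_space set"
  assumes B: "countable B" "topological_basis B"
    and closed: "\<And>\<omega>. \<omega> \<in> space M \<Longrightarrow> closed (Y \<omega>)"
    and null: "\<And>b. b \<in> B \<Longrightarrow> hitting_event M Z b - hitting_event M Y b \<in> null_sets M"
  shows "AE \<omega> in M. Z \<omega> \<subseteq> Y \<omega>"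
proof -
  have "AE \<omega> in M. \<forall>b\<in>B. \<omega> \<notin> hitting_event M Z b - hitting_event M Y b"
    using null unfolding AE_ball_countable[OF B(1)] by (blast intro: AE_not_in)
  then show ?thesis
    using AE_space
  proof eventually_elim
    case (elim \<omega>)
    show ?case
    proof
      fix z assume z: "z \<in> Z \<omega>"
      show "z \<in> Y \<omega>"
      proof (rule ccontr)
        assume "z \<notin> Y \<omega>"
        moreover have "open (- Y \<omega>)" using closed elim by auto
        ultimately obtain b where "b \<in> B" "z \<in> b" "b \<subseteq> - Y \<omega>"
          using topological_basisE[OF B(2)] by (metis ComplI)
        then show False using elim z unfolding hitting_event_def by blast
      qed
    qed
  qed
qed

lemma hitting_maximiser_exists:
  assumes "prob_space M" "subalgebra M H"
    and closed: "\<And>\<omega>. \<omega> \<in> space M \<Longrightarrow> closed (X \<omega>)"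
    and B: "countable B" "\<And>b. b \<in> B \<Longrightarrow> open b"
  obtains Y where "Y \<in> random_closed_subsets M H X"
    "\<forall>b\<in>B. \<forall>Z\<in>random_closed_subsets M H X.
      measure M (hitting_event M Z b) \<le> measure M (hitting_event M Y b)"
proof -
  interpret prob_space M by fact
  let ?C = "random_closed_subsets M H X"
  define s where "s b = Sup ((\<lambda>Z. measure M (hitting_event M Z b)) ` ?C)" for b
  have "(\<lambda>_. {}) \<in> ?C"
    unfolding random_closed_subsets_def random_closed_set_def effros_measurable_def by simp
  then have nonempty: "(\<lambda>Z. measure M (hitting_event M Z b)) ` ?C \<noteq> {}" for b by blast
  have bdd: "bdd_above ((\<lambda>Z. measure M (hitting_event M Z b)) ` ?C)" for b
    by (rule bdd_aboveI[where M=1]) (auto simp: prob_le_1)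
  have "\<exists>W\<in>?C. s b - 1 / real (Suc n) < measure M (hitting_event M W b)" for b n
  proof -
    have "s b - 1 / real (Suc n) < s b" by simp
    then show ?thesis unfolding s_def less_cSup_iff[OF nonempty bdd] by blast
  qed
  then obtain W where W: "\<And>b n. W b n \<in> ?C"
    "\<And>b n. s b - 1 / real (Suc n) < measure M (hitting_event M (W b n) b)"
    by metis
  define Y where "Y \<omega> = closure (\<Union>(b, n)\<in>B \<times> UNIV. W b n \<omega>)" for \<omega>
  have Y: "Y \<in> ?C"
    unfolding Y_def using B(1) W(1) closed by (intro closure_UN_in_random_closed_subsets) auto
  have "measure M (hitting_event M Z b) \<le> measure M (hitting_event M Y b)"
    if b: "b \<in> B" and Z: "Z \<in> ?C" for b Z
  proof -
    have "measure M (hitting_event M Z b) \<le> s b"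
      unfolding s_def using Z by (intro cSup_upper[OF _ bdd]) simp
    also have "s b \<le> measure M (hitting_event M Y b)"
    proof (rule field_le_epsilon)
      fix e :: real assume "0 < e"
      then obtain n where n: "1 / real (Suc n) < e" using nat_approx_posE by blast
      have "W b n \<omega> \<subseteq> Y \<omega>" for \<omega>
        using b closure_subset unfolding Y_def by fastforce
      then have "hitting_event M (W b n) b \<subseteq> hitting_event M Y b"
        unfolding hitting_event_def by blast
      then have "measure M (hitting_event M (W b n) b) \<le> measure M (hitting_event M Y b)"
        using hitting_event_in_sets[OF assms(2) _ B(2)[OF b]] Y
        unfolding random_closed_subsets_def by (intro finite_measure_mono) auto
      then show "s b \<le> measure M (hitting_event M Y b) + e" using W(2)[of b n] n by linarith
    qed
    finally show ?thesis .
  qed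
  with Y show thesis using that by blast
qed

lemma cond_core_exists:
  fixes X :: "'a \<Rightarrow> 'b::{metric_space, second_countable_topology} set"
  assumes "prob_space M" "subalgebra M H"
    and closed: "\<And>\<omega>. \<omega> \<in> space M \<Longrightarrow> closed (X \<omega>)"
  obtains Y where "is_cond_core M H X Y"
proof -
  interpret prob_space M by fact
  obtain B :: "'b set set" where B: "countable B" "topological_basis B"
    using ex_countable_basis by blast
  obtain Y where Y: "Y \<in> random_closed_subsets M H X"
    and max: "\<forall>b\<in>B. \<forall>Z\<in>random_closed_subsets M H X.
      measure M (hitting_event M Z b) \<le> measure M (hitting_event M Y b)"
    using hitting_maximiser_exists[of M H X B] assms(1,2) closed B(1) topological_basis_open[OF B(2)]
    by blast
  have "AE \<omega> in M. Z \<omega> \<subseteq> Y \<omega>" if Z: "Z \<in> random_closed_subsets M H X" for Z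
  proof (rule AE_subset_if_hitting_events_null[OF B])
    have "space H = space M" using assms(2) unfolding subalgebra_def by simp
    then show "\<omega> \<in> space M \<Longrightarrow> closed (Y \<omega>)" for \<omega>
      using Y unfolding random_closed_subsets_def random_closed_set_def by simp
    fix b assume b: "b \<in> B"
    have hit_sets: "hitting_event M V b \<in> sets M" if "V \<in> random_closed_subsets M H X" for V
      using hitting_event_in_sets[OF assms(2) _ topological_basis_open[OF B(2) b]] that
      unfolding random_closed_subsets_def by blast
    have "(\<lambda>\<omega>. closure (\<Union>V\<in>{Y, Z}. V \<omega>)) \<in> random_closed_subsets M H X"
      using Y Z closed by (intro closure_UN_in_random_closed_subsets) auto
    then have "measure M (hitting_event M (\<lambda>\<omega>. closure (\<Union>V\<in>{Y, Z}. V \<omega>)) b)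
        \<le> measure M (hitting_event M Y b)"
      using max b by blast
    then have "measure M (hitting_event M Y b \<union> hitting_event M Z b) \<le> measure M (hitting_event M Y b)"
      unfolding hitting_event_closure_UN[OF topological_basis_open[OF B(2) b]] by simp
    then have "measure M (hitting_event M Z b - hitting_event M Y b) = 0"
      using hit_sets Y Z by (simp add: finite_measure_Union' measure_le_0_iff)
    then show "hitting_event M Z b - hitting_event M Y b \<in> null_sets M"
      using hit_sets Y Z by (simp add: emeasure_eq_measure null_sets_def)
  qed
  then have "is_cond_core M H X Y" using Y unfolding is_cond_core_iff by blast
  then show thesis by (rule that)
qed

section \<open>Random vectors and trading sets\<close>

lemma L0_add:
  fixes f g :: "'a \<Rightarrow> 'b::{second_countable_topology, topological_monoid_add}"
  assumes "AE \<omega> in M. \<forall>x\<in>G \<omega>. \<forall>y\<in>G \<omega>. x + y \<in> G \<omega>" "f \<in> L0 M H G" "g \<in> L0 M H G"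
  shows "(\<lambda>\<omega>. f \<omega> + g \<omega>) \<in> L0 M H G"
  using assms unfolding L0_def by auto

lemma negset_mem_iff [simp]: "x \<in> negset G \<omega> \<longleftrightarrow> - x \<in> G \<omega>"
  unfolding negset_def by (force intro: image_eqI[where x="- x"])

lemma L0_uminus_negset_iff:
  fixes \<xi> :: "'a \<Rightarrow> 'b::{second_countable_topology, real_normed_vector}"
  shows "(\<lambda>\<omega>. - \<xi> \<omega>) \<in> L0 M H (negset G) \<longleftrightarrow> \<xi> \<in> L0 M H G"
  unfolding L0_def by auto

lemma Aset_self_subset: "Aset M F K t t \<subseteq> L0 M (F t) (negset (K t))"
  unfolding Aset_def by auto

lemma Aset_SucE:
  assumes "a \<in> Aset M F K t T" "t < T"
  obtains \<xi> a' where "\<xi> \<in> L0 M (F t) (negset (K t))" "a' \<in> Aset M F K (Suc t) T"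
    "a = (\<lambda>\<omega>. \<xi> \<omega> + a' \<omega>)"
proof -
  from assms(1) obtain \<xi> where \<xi>: "\<forall>u\<in>{t..T}. \<xi> u \<in> L0 M (F u) (negset (K u))"
    and a: "a = (\<lambda>\<omega>. \<Sum>u\<in>{t..T}. \<xi> u \<omega>)"
    unfolding Aset_def by blast
  have "(\<lambda>\<omega>. \<Sum>u\<in>{Suc t..T}. \<xi> u \<omega>) \<in> Aset M F K (Suc t) T"
    using \<xi> unfolding Aset_def by auto
  moreover have "a = (\<lambda>\<omega>. \<xi> t \<omega> + (\<Sum>u\<in>{Suc t..T}. \<xi> u \<omega>))"
    using assms(2) unfolding a by (simp add: sum.atLeast_Suc_atMost)
  ultimately show thesis using \<xi> assms(2) by (intro that) auto
qed

lemma add_ones_diff_mem_nonneg_orthant: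
  fixes d y :: "real^'d"
  assumes "dist y d < r"
  shows "(d + r *\<^sub>R (\<chi> i. 1)) - y \<in> nonneg_orthant"
  unfolding nonneg_orthant_def
proof (intro CollectI allI)
  fix i
  have "\<bar>(y - d) $ i\<bar> < r"
    using component_le_norm_cart[of "y - d" i] assms by (simp add: dist_norm)
  then show "0 \<le> (d + r *\<^sub>R (\<chi> i. 1) - y) $ i" by simp
qed

lemma subset_if_dense_shifts_mem:
  fixes Y C :: "(real^'d) set"
  assumes "closed C"
    and dense: "\<And>U. open U \<Longrightarrow> U \<noteq> {} \<Longrightarrow> \<exists>d\<in>D. d \<in> U"
    and shifts: "\<And>d n. d \<in> D \<Longrightarrow> Y \<inter> ball d (1 / real (Suc n)) \<noteq> {} \<Longrightarrow>
      d + (1 / real (Suc n)) *\<^sub>R (\<chi> i. 1) \<in> C"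
  shows "Y \<subseteq> C"
proof
  fix y assume y: "y \<in> Y"
  define c where "c = 1 + norm (\<chi> i. 1 :: real^'d)"
  have c: "c > 0" unfolding c_def by (simp add: add_pos_nonneg)
  have "\<exists>z\<in>C. dist z y < e" if "e > 0" for e
  proof -
    have "e / c > 0" using \<open>e > 0\<close> c by simp
    then obtain n where n: "1 / real (Suc n) < e / c" using nat_approx_posE by blast
    define r where "r = 1 / real (Suc n)"
    have r: "r > 0" unfolding r_def by simp
    obtain d where d: "d \<in> D" "d \<in> ball y r"
      using dense[of "ball y r"] unfolding r_def by auto
    then have "Y \<inter> ball d r \<noteq> {}" using y by (auto simp: dist_commute)
    then have "d + r *\<^sub>R (\<chi> i. 1) \<in> C" using shifts d(1) unfolding r_def by blast
    moreover have "dist (d + r *\<^sub>R (\<chi> i. 1)) y < r * c"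
    proof -
      have "dist (d + r *\<^sub>R (\<chi> i. 1)) y \<le> dist (d + r *\<^sub>R (\<chi> i. 1)) d + dist d y"
        by (rule dist_triangle)
      moreover have "dist (d + r *\<^sub>R (\<chi> i. 1)) d = r * norm (\<chi> i. 1 :: real^'d)"
        using r by (simp add: dist_norm)
      moreover have "r * c = r + r * norm (\<chi> i. 1 :: real^'d)"
        unfolding c_def by (simp add: algebra_simps)
      ultimately show ?thesis using d(2) by (simp add: dist_commute)
    qed
    moreover have "r * c < e" using n c unfolding r_def by (simp add: field_simps)
    ultimately show ?thesis by (meson less_trans)
  qed
  then show "y \<in> C" using closed_approachable[OF assms(1)] by blast
qed

section \<open>No arbitrage of the second kind\<close>

locale market =
  fixes M :: "'a measure" and F :: "nat \<Rightarrow> 'a measure"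
    and K :: "nat \<Rightarrow> 'a \<Rightarrow> (real^'d) set" and T :: nat
  assumes setting: "market_setting M F K T"
begin

lemma prob_space: "prob_space M"
  using setting unfolding market_setting_def by blast

lemma subalgebra: "t \<le> T \<Longrightarrow> subalgebra M (F t)"
  using setting unfolding market_setting_def subalgebra_def by blast

lemma filtration_mono: "s \<le> u \<Longrightarrow> u \<le> T \<Longrightarrow> sets (F s) \<subseteq> sets (F u)"
proof (induction u rule: dec_induct)
  case (step n)
  then have "sets (F n) \<subseteq> sets (F (Suc n))" using setting unfolding market_setting_def by simp
  with step show ?case by auto
qed simp

lemma measurable_later:
  assumes "s \<le> u" "u \<le> T" "f \<in> borel_measurable (F s)"
  shows "f \<in> borel_measurable (F u)"
  using assms filtration_mono[OF assms(1,2)] subalgebra[of s] subalgebra[of u]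
  unfolding measurable_def subalgebra_def by auto

lemma random_closed_set_K: "t \<le> T \<Longrightarrow> random_closed_set (F t) (K t)"
  using setting unfolding market_setting_def by blast

lemma closed_K: "t \<le> T \<Longrightarrow> \<omega> \<in> space M \<Longrightarrow> closed (K t \<omega>)"
  using random_closed_set_K subalgebra unfolding random_closed_set_def subalgebra_def by blast

lemma K_add_nonneg_orthant: "t \<le> T \<Longrightarrow> AE \<omega> in M. \<forall>x\<in>K t \<omega>. \<forall>y\<in>nonneg_orthant. x + y \<in> K t \<omega>"
  using setting unfolding market_setting_def by blast

lemma zero_in_K:
  assumes "t \<le> T" shows "AE \<omega> in M. 0 \<in> K t \<omega>"
proof -
  have "AE \<omega> in M. K t \<omega> \<inter> nonpos_orthant = {0}"
    using setting assms unfolding market_setting_def by blast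
  then show ?thesis by (rule eventually_mono) auto
qed

lemma zero_in_L0_negset_K: "t \<le> T \<Longrightarrow> (\<lambda>_. 0) \<in> L0 M H (negset (K t))"
  using zero_in_K unfolding L0_def by simp

lemma NA2D:
  assumes "NA2 M F K T" "t \<le> T" "\<eta> \<in> L0 M (F t) (\<lambda>_. UNIV)" "a \<in> Aset M F K t T"
    "(\<lambda>\<omega>. \<eta> \<omega> + a \<omega>) \<in> L0 M (F T) (K T)"
  shows "\<eta> \<in> L0 M (F t) (K t)"
  using assms unfolding NA2_def by blast

lemma Aset_single:
  assumes "t \<le> u" "u \<le> T" "\<zeta> \<in> L0 M (F u) (negset (K u))"
  shows "\<zeta> \<in> Aset M F K t T"
proof -
  define \<xi> where "\<xi> v = (if v = u then \<zeta> else (\<lambda>_. 0))" for v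
  have "\<forall>v\<in>{t..T}. \<xi> v \<in> L0 M (F v) (negset (K v))"
    using assms(3) zero_in_L0_negset_K unfolding \<xi>_def by auto
  moreover have "\<zeta> = (\<lambda>\<omega>. \<Sum>v\<in>{t..T}. \<xi> v \<omega>)"
    using assms(1,2) unfolding \<xi>_def by (simp add: if_distrib[of "\<lambda>f. f _"] sum.delta)
  ultimately show ?thesis unfolding Aset_def by blast
qed

lemma L0_subset_if_NA2:
  assumes NA2: "NA2 M F K T" and "s \<le> u" "u \<le> T"
  shows "L0 M (F s) (K u) \<subseteq> L0 M (F s) (K s)"
proof
  fix \<xi> assume \<xi>: "\<xi> \<in> L0 M (F s) (K u)"
  then have "\<xi> \<in> L0 M (F u) (K u)"
    using measurable_later[OF assms(2,3)] unfolding L0_def by blast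
  then have "(\<lambda>\<omega>. - \<xi> \<omega>) \<in> Aset M F K s T"
    using Aset_single[OF assms(2,3)] L0_uminus_negset_iff by blast
  moreover have "(\<lambda>\<omega>. \<xi> \<omega> + - \<xi> \<omega>) \<in> L0 M (F T) (K T)"
    using zero_in_K[of T] unfolding L0_def by simp
  moreover have "\<xi> \<in> L0 M (F s) (\<lambda>_. UNIV)" using \<xi> unfolding L0_def by simp
  ultimately show "\<xi> \<in> L0 M (F s) (K s)"
    using NA2D[OF NA2] assms(2,3) by (meson order_trans)
qed

lemma Xi0_subset_L0_if_NA2:
  assumes NA2: "NA2 M F K T" and "t \<le> T"
  shows "Xi0 M F K T t \<subseteq> L0 M (F t) (K t)"
proof
  fix \<eta> assume "\<eta> \<in> Xi0 M F K T t"
  then obtain a where a: "a \<in> Aset M F K t T" and "\<eta> = (\<lambda>\<omega>. - a \<omega>)"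
    and \<eta>: "\<eta> \<in> L0 M (F t) (\<lambda>_. UNIV)"
    unfolding Xi0_def by blast
  moreover have "(\<lambda>\<omega>. - a \<omega> + a \<omega>) \<in> L0 M (F T) (K T)"
    using zero_in_K[of T] unfolding L0_def by simp
  ultimately show "\<eta> \<in> L0 M (F t) (K t)" using NA2D[OF NA2 assms(2) \<eta> a] by simp
qed

lemma L0_subset_Xi0:
  assumes "t \<le> T"
  shows "L0 M (F t) (K t) \<subseteq> Xi0 M F K T t"
proof
  fix \<eta> assume \<eta>: "\<eta> \<in> L0 M (F t) (K t)"
  then have "(\<lambda>\<omega>. - \<eta> \<omega>) \<in> Aset M F K t T"
    using Aset_single[OF order_refl assms] L0_uminus_negset_iff by blast
  then have "\<eta> \<in> (\<lambda>f \<omega>. - f \<omega>) ` Aset M F K t T"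
    by (rule image_eqI[rotated]) simp
  moreover have "\<eta> \<in> L0 M (F t) (\<lambda>_. UNIV)" using \<eta> unfolding L0_def by simp
  ultimately show "\<eta> \<in> Xi0 M F K T t" unfolding Xi0_def by blast
qed


lemma corner_selector_in_L0:
  assumes s: "Suc s \<le> T"
    and Y: "random_closed_set (F s) Y" "AE \<omega> in M. Y \<omega> \<subseteq> K (Suc s) \<omega>"
  shows "(\<lambda>\<omega>. if Y \<omega> \<inter> ball d r \<noteq> {} then d + r *\<^sub>R (\<chi> i. 1) else 0) \<in> L0 M (F s) (K (Suc s))"
proof -
  define A where "A = {\<omega>. Y \<omega> \<inter> ball d r \<noteq> {}}"
  have "{\<omega> \<in> space (F s). Y \<omega> \<inter> ball d r \<noteq> {}} \<in> sets (F s)"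
    using Y(1) unfolding random_closed_set_def effros_measurable_def by simp
  moreover have "A \<inter> space (F s) = {\<omega> \<in> space (F s). Y \<omega> \<inter> ball d r \<noteq> {}}"
    unfolding A_def by blast
  ultimately have "A \<inter> space (F s) \<in> sets (F s)" by simp
  then have "(\<lambda>\<omega>. if \<omega> \<in> A then d + r *\<^sub>R (\<chi> i. 1) else 0) \<in> borel_measurable (F s)"
    by (intro measurable_If_set) simp_all
  moreover have "AE \<omega> in M. (if \<omega> \<in> A then d + r *\<^sub>R (\<chi> i. 1) else 0) \<in> K (Suc s) \<omega>"
    using Y(2) K_add_nonneg_orthant[OF s] zero_in_K[OF s]
  proof eventually_elim
    case (elim \<omega>)
    show ?case
    proof (cases "\<omega> \<in> A")
      case True
      then obtain y where "y \<in> Y \<omega>" "dist y d < r" unfolding A_def by (auto simp: dist_commute)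
      then have "y + (d + r *\<^sub>R (\<chi> i. 1) - y) \<in> K (Suc s) \<omega>"
        using elim add_ones_diff_mem_nonneg_orthant by blast
      then show ?thesis using True by simp
    qed (use elim in simp)
  qed
  ultimately show ?thesis unfolding L0_def A_def by simp
qed

lemma AE_subset_K_if_one_step:
  assumes s: "Suc s \<le> T"
    and one_step: "L0 M (F s) (K (Suc s)) \<subseteq> L0 M (F s) (K s)"
    and Y: "random_closed_set (F s) Y" "AE \<omega> in M. Y \<omega> \<subseteq> K (Suc s) \<omega>"
  shows "AE \<omega> in M. Y \<omega> \<subseteq> K s \<omega>"
proof -
  obtain D :: "(real^'d) set" where D: "countable D" "\<And>U. open U \<Longrightarrow> U \<noteq> {} \<Longrightarrow> \<exists>d\<in>D. d \<in> U"
    by (rule countable_dense_setE) blast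
  define \<eta> where "\<eta> d n \<omega> =
    (if Y \<omega> \<inter> ball d (1 / real (Suc n)) \<noteq> {} then d + (1 / real (Suc n)) *\<^sub>R (\<chi> i. 1) else 0)"
    for d n \<omega>
  have "\<eta> d n \<in> L0 M (F s) (K s)" for d n
    using subsetD[OF one_step corner_selector_in_L0[OF s Y]] unfolding \<eta>_def .
  then have "AE \<omega> in M. \<forall>d\<in>D. \<forall>n. \<eta> d n \<omega> \<in> K s \<omega>"
    unfolding L0_def AE_ball_countable[OF D(1)] AE_all_countable by blast
  then show ?thesis
    using AE_space
  proof eventually_elim
    case (elim \<omega>)
    have "closed (K s \<omega>)" using closed_K s elim by simp
    moreover have "d + (1 / real (Suc n)) *\<^sub>R (\<chi> i. 1) \<in> K s \<omega>"
      if "d \<in> D" "Y \<omega> \<inter> ball d (1 / real (Suc n)) \<noteq> {}" for d n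
    proof -
      have "\<eta> d n \<omega> \<in> K s \<omega>" using elim that(1) by blast
      then show ?thesis unfolding \<eta>_def if_P[OF that(2)] .
    qed
    ultimately show ?case using subset_if_dense_shifts_mem D(2) by blast
  qed
qed

lemma one_step_iff_cond_core:
  assumes s: "Suc s \<le> T"
  shows "L0 M (F s) (K (Suc s)) \<subseteq> L0 M (F s) (K s)
    \<longleftrightarrow> (\<forall>Y. is_cond_core M (F s) (K (Suc s)) Y \<longrightarrow> (AE \<omega> in M. Y \<omega> \<subseteq> K s \<omega>))"
proof
  assume "L0 M (F s) (K (Suc s)) \<subseteq> L0 M (F s) (K s)"
  then show "\<forall>Y. is_cond_core M (F s) (K (Suc s)) Y \<longrightarrow> (AE \<omega> in M. Y \<omega> \<subseteq> K s \<omega>)"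
    using AE_subset_K_if_one_step[OF s] unfolding is_cond_core_def by blast
next
  assume core: "\<forall>Y. is_cond_core M (F s) (K (Suc s)) Y \<longrightarrow> (AE \<omega> in M. Y \<omega> \<subseteq> K s \<omega>)"
  have "s \<le> T" using s by simp
  obtain Y where Y: "is_cond_core M (F s) (K (Suc s)) Y"
    using cond_core_exists[OF prob_space subalgebra[OF \<open>s \<le> T\<close>] closed_K[OF s]] .
  then have Y_max: "AE \<omega> in M. Z \<omega> \<subseteq> Y \<omega>"
    if "random_closed_set (F s) Z" "AE \<omega> in M. Z \<omega> \<subseteq> K (Suc s) \<omega>" for Z
    using that unfolding is_cond_core_def by blast
  have Y_K: "AE \<omega> in M. Y \<omega> \<subseteq> K s \<omega>" using core Y by blast
  show "L0 M (F s) (K (Suc s)) \<subseteq> L0 M (F s) (K s)"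
  proof
    fix \<xi> assume \<xi>: "\<xi> \<in> L0 M (F s) (K (Suc s))"
    then have "\<xi> \<in> borel_measurable (F s)" "AE \<omega> in M. {\<xi> \<omega>} \<subseteq> K (Suc s) \<omega>"
      unfolding L0_def by simp_all
    then have "AE \<omega> in M. {\<xi> \<omega>} \<subseteq> Y \<omega>" by (intro Y_max random_closed_set_singleton)
    then have "AE \<omega> in M. \<xi> \<omega> \<in> K s \<omega>" using Y_K by eventually_elim blast
    then show "\<xi> \<in> L0 M (F s) (K s)" using \<xi> unfolding L0_def by blast
  qed
qed

lemma cl0_Xi0_subset_L0_if_NA2:
  assumes NA2: "NA2 M F K T" and t: "Suc t \<le> T"
    and Y: "Y \<in> cl0 M (Xi0 M F K T (Suc t) \<inter> L0 M (F t) (\<lambda>_. UNIV))" "Y \<in> borel_measurable (F t)"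
  shows "Y \<in> L0 M (F t) (K t)"
proof -
  obtain X where X: "\<And>n. X n \<in> Xi0 M F K T (Suc t) \<inter> L0 M (F t) (\<lambda>_. UNIV)"
    and conv: "conv_in_prob M X Y" and Y_M: "Y \<in> borel_measurable M"
    using Y(1) unfolding cl0_def by blast
  have "t \<le> T" using t by simp
  have X_M: "X n \<in> borel_measurable M" for n
  proof -
    have "X n \<in> L0 M (F t) (\<lambda>_. UNIV)" using X by blast
    then have "X n \<in> borel_measurable (F t)" unfolding L0_def by simp
    then show ?thesis by (rule measurable_from_subalg[OF subalgebra[OF \<open>t \<le> T\<close>]])
  qed
  have X_K: "AE \<omega> in M. X n \<omega> \<in> K (Suc t) \<omega>" for n
  proof -
    have "X n \<in> L0 M (F (Suc t)) (K (Suc t))" using X Xi0_subset_L0_if_NA2[OF NA2 t] by blast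
    then show ?thesis unfolding L0_def by simp
  qed
  have "AE \<omega> in M. Y \<omega> \<in> K (Suc t) \<omega>"
    using prob_space conv Y_M X_M X_K closed_K[OF t] by (rule AE_mem_if_conv_in_prob)
  then have "Y \<in> L0 M (F t) (K (Suc t))" using Y(2) unfolding L0_def by simp
  then show ?thesis by (rule subsetD[OF L0_subset_if_NA2[OF NA2 le_SucI[OF order_refl] t]])
qed

end

locale conic_market = market +
  assumes cones: "\<forall>t\<le>T. AE \<omega> in M. cone (K t \<omega>)"
begin

lemma K_add:
  assumes "t \<le> T" shows "AE \<omega> in M. \<forall>x\<in>K t \<omega>. \<forall>y\<in>K t \<omega>. x + y \<in> K t \<omega>"
proof -
  have "\<forall>\<omega>\<in>space M. convex (K t \<omega>)" using setting assms unfolding market_setting_def by blast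
  then have "AE \<omega> in M. convex (K t \<omega>)" by (rule AE_I2[OF bspec])
  moreover have "AE \<omega> in M. cone (K t \<omega>)" using cones assms by blast
  ultimately show ?thesis by eventually_elim (use convex_cone in blast)
qed

lemma negset_K_add:
  assumes "t \<le> T" shows "AE \<omega> in M. \<forall>x\<in>negset (K t) \<omega>. \<forall>y\<in>negset (K t) \<omega>. x + y \<in> negset (K t) \<omega>"
  using K_add[OF assms] by eventually_elim (metis minus_add_distrib negset_mem_iff)

lemma AE_mem_K_cancel:
  assumes "t \<le> T" "AE \<omega> in M. \<eta> \<omega> + \<xi> \<omega> \<in> K t \<omega>" "AE \<omega> in M. - \<xi> \<omega> \<in> K t \<omega>"
  shows "AE \<omega> in M. \<eta> \<omega> \<in> K t \<omega>"
  using assms(2,3) K_add[OF assms(1)]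
proof eventually_elim
  case (elim \<omega>)
  then have "(\<eta> \<omega> + \<xi> \<omega>) + - \<xi> \<omega> \<in> K t \<omega>" by blast
  then show ?case by simp
qed

lemma Aset_add:
  assumes "a \<in> Aset M F K t T" "b \<in> Aset M F K t T"
  shows "(\<lambda>\<omega>. a \<omega> + b \<omega>) \<in> Aset M F K t T"
proof -
  obtain \<xi> where \<xi>: "\<forall>u\<in>{t..T}. \<xi> u \<in> L0 M (F u) (negset (K u))" "a = (\<lambda>\<omega>. \<Sum>u\<in>{t..T}. \<xi> u \<omega>)"
    using assms(1) unfolding Aset_def by blast
  obtain \<zeta> where \<zeta>: "\<forall>u\<in>{t..T}. \<zeta> u \<in> L0 M (F u) (negset (K u))" "b = (\<lambda>\<omega>. \<Sum>u\<in>{t..T}. \<zeta> u \<omega>)"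
    using assms(2) unfolding Aset_def by blast
  have "\<forall>u\<in>{t..T}. (\<lambda>\<omega>. \<xi> u \<omega> + \<zeta> u \<omega>) \<in> L0 M (F u) (negset (K u))"
    using \<xi>(1) \<zeta>(1) negset_K_add by (simp add: L0_add)
  moreover have "(\<lambda>\<omega>. a \<omega> + b \<omega>) = (\<lambda>\<omega>. \<Sum>u\<in>{t..T}. \<xi> u \<omega> + \<zeta> u \<omega>)"
    unfolding \<xi>(2) \<zeta>(2) by (simp add: sum.distrib)
  ultimately show ?thesis
    unfolding Aset_def by (intro CollectI exI[where x="\<lambda>u \<omega>. \<xi> u \<omega> + \<zeta> u \<omega>"] conjI)
qed

lemma NA2_if_Xi0_eq:
  assumes Xi0_eq: "\<forall>t\<le>T. Xi0 M F K T t = L0 M (F t) (K t)"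
  shows "NA2 M F K T"
  unfolding NA2_def
proof (intro allI impI ballI)
  fix t \<eta> assume t: "t \<le> T" and \<eta>: "\<eta> \<in> L0 M (F t) (\<lambda>_. UNIV)"
    and "\<exists>a\<in>Aset M F K t T. (\<lambda>\<omega>. \<eta> \<omega> + a \<omega>) \<in> L0 M (F T) (K T)"
  then obtain a where a: "a \<in> Aset M F K t T" and solvent: "(\<lambda>\<omega>. \<eta> \<omega> + a \<omega>) \<in> L0 M (F T) (K T)"
    by blast
  \<comment> \<open>Liquidating the solvent position \<open>\<eta> + a\<close> at time \<open>T\<close> shows \<open>-\<eta> \<in> A\<^bsub>t,T\<^esub>\<close>.\<close>
  have "(\<lambda>\<omega>. - (\<eta> \<omega> + a \<omega>)) \<in> Aset M F K t T"
    using Aset_single[OF t order_refl] solvent L0_uminus_negset_iff by blast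
  then have "(\<lambda>\<omega>. a \<omega> + - (\<eta> \<omega> + a \<omega>)) \<in> Aset M F K t T"
    using Aset_add[OF a] by blast
  then have "\<eta> \<in> (\<lambda>f \<omega>. - f \<omega>) ` Aset M F K t T"
    by (rule image_eqI[rotated]) simp
  then have "\<eta> \<in> Xi0 M F K T t" using \<eta> unfolding Xi0_def by blast
  then show "\<eta> \<in> L0 M (F t) (K t)" using Xi0_eq t by blast
qed

lemma NA2_iff_Xi0_eq: "NA2 M F K T \<longleftrightarrow> (\<forall>t\<le>T. Xi0 M F K T t = L0 M (F t) (K t))"
  using NA2_if_Xi0_eq Xi0_subset_L0_if_NA2 L0_subset_Xi0 by blast

lemma AE_mem_K_if_one_step:
  assumes one_step: "\<And>s. Suc s \<le> T \<Longrightarrow> L0 M (F s) (K (Suc s)) \<subseteq> L0 M (F s) (K s)"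
    and "t \<le> T" "\<eta> \<in> borel_measurable (F t)" "a \<in> Aset M F K t T"
    and "AE \<omega> in M. \<eta> \<omega> + a \<omega> \<in> K T \<omega>"
  shows "AE \<omega> in M. \<eta> \<omega> \<in> K t \<omega>"
  using assms(2-)
proof (induction t arbitrary: \<eta> a rule: inc_induct)
  case base
  have "a \<in> L0 M (F T) (negset (K T))" using Aset_self_subset base.prems(2) by blast
  then have "AE \<omega> in M. - a \<omega> \<in> K T \<omega>" unfolding L0_def by simp
  with base.prems(3) show ?case by (rule AE_mem_K_cancel[OF order_refl])
next
  case (step t)
  obtain \<xi> a' where \<xi>: "\<xi> \<in> L0 M (F t) (negset (K t))" and a': "a' \<in> Aset M F K (Suc t) T"
    and a: "a = (\<lambda>\<omega>. \<xi> \<omega> + a' \<omega>)"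
    using Aset_SucE[OF step.prems(2) step.hyps(2)] .
  have t: "t \<le> T" "Suc t \<le> T" using step.hyps by simp_all
  have "\<xi> \<in> borel_measurable (F t)" using \<xi> unfolding L0_def by simp
  with step.prems(1) have \<eta>\<xi>: "(\<lambda>\<omega>. \<eta> \<omega> + \<xi> \<omega>) \<in> borel_measurable (F t)"
    by (rule borel_measurable_add)
  then have "(\<lambda>\<omega>. \<eta> \<omega> + \<xi> \<omega>) \<in> borel_measurable (F (Suc t))"
    by (rule measurable_later[OF le_SucI[OF order_refl] t(2)])
  moreover note a'
  moreover have "AE \<omega> in M. (\<eta> \<omega> + \<xi> \<omega>) + a' \<omega> \<in> K T \<omega>"
    using step.prems(3) unfolding a by (simp add: add.assoc)
  ultimately have "AE \<omega> in M. \<eta> \<omega> + \<xi> \<omega> \<in> K (Suc t) \<omega>"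
    by (rule step.IH)
  then have "(\<lambda>\<omega>. \<eta> \<omega> + \<xi> \<omega>) \<in> L0 M (F t) (K (Suc t))"
    using \<eta>\<xi> unfolding L0_def by simp
  then have "(\<lambda>\<omega>. \<eta> \<omega> + \<xi> \<omega>) \<in> L0 M (F t) (K t)"
    by (rule subsetD[OF one_step[OF t(2)]])
  then have "AE \<omega> in M. \<eta> \<omega> + \<xi> \<omega> \<in> K t \<omega>" unfolding L0_def by simp
  moreover have "AE \<omega> in M. - \<xi> \<omega> \<in> K t \<omega>" using \<xi> unfolding L0_def by simp
  ultimately show ?case by (rule AE_mem_K_cancel[OF t(1)])
qed

lemma NA2_if_one_step:
  assumes "\<And>s. Suc s \<le> T \<Longrightarrow> L0 M (F s) (K (Suc s)) \<subseteq> L0 M (F s) (K s)"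
  shows "NA2 M F K T"
  unfolding NA2_def
proof (intro allI impI ballI)
  fix t \<eta> assume t: "t \<le> T" and \<eta>: "\<eta> \<in> L0 M (F t) (\<lambda>_. UNIV)"
    and "\<exists>a\<in>Aset M F K t T. (\<lambda>\<omega>. \<eta> \<omega> + a \<omega>) \<in> L0 M (F T) (K T)"
  then obtain a where a: "a \<in> Aset M F K t T" "(\<lambda>\<omega>. \<eta> \<omega> + a \<omega>) \<in> L0 M (F T) (K T)"
    by blast
  have "\<eta> \<in> borel_measurable (F t)" "AE \<omega> in M. \<eta> \<omega> + a \<omega> \<in> K T \<omega>"
    using \<eta> a(2) unfolding L0_def by simp_all
  then have "AE \<omega> in M. \<eta> \<omega> \<in> K t \<omega>"
    using AE_mem_K_if_one_step[OF assms t _ a(1)] by blast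
  then show "\<eta> \<in> L0 M (F t) (K t)" using \<eta> unfolding L0_def by simp
qed

lemma NA2_iff_one_step:
  "NA2 M F K T \<longleftrightarrow> (\<forall>s. Suc s \<le> T \<longrightarrow> L0 M (F s) (K (Suc s)) \<subseteq> L0 M (F s) (K s))"
proof
  assume "NA2 M F K T"
  then show "\<forall>s. Suc s \<le> T \<longrightarrow> L0 M (F s) (K (Suc s)) \<subseteq> L0 M (F s) (K s)"
    using L0_subset_if_NA2[OF _ le_SucI[OF order_refl]] by simp
qed (simp add: NA2_if_one_step)

lemma NA2_iff_cond_core:
  "NA2 M F K T \<longleftrightarrow>
    (\<forall>t\<in>{1..T}. \<forall>Y. is_cond_core M (F (t - 1)) (K t) Y \<longrightarrow> (AE \<omega> in M. Y \<omega> \<subseteq> K (t - 1) \<omega>))"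
proof -
  have shift: "(\<forall>t\<in>{1..T}. P t) \<longleftrightarrow> (\<forall>s. Suc s \<le> T \<longrightarrow> P (Suc s))" for P
  proof
    assume P: "\<forall>s. Suc s \<le> T \<longrightarrow> P (Suc s)"
    show "\<forall>t\<in>{1..T}. P t"
    proof
      fix t assume "t \<in> {1..T}"
      then obtain s where "t = Suc s" "Suc s \<le> T" by (cases t) auto
      then show "P t" using P by simp
    qed
  qed simp
  show ?thesis
    unfolding NA2_iff_one_step shift using one_step_iff_cond_core by simp
qed

lemma Xihat0_subset_L0_if_NA2:
  assumes NA2: "NA2 M F K T" and t: "t \<le> T"
  shows "Xihat0 M F K T t \<inter> L0 M (F t) (\<lambda>_. UNIV) \<subseteq> L0 M (F t) (K t)"
proof
  fix x assume x: "x \<in> Xihat0 M F K T t \<inter> L0 M (F t) (\<lambda>_. UNIV)"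
  show "x \<in> L0 M (F t) (K t)"
  proof (cases "T \<le> t")
    case True
    then have "t = T" "x \<in> Xi0 M F K T T" using x t unfolding Xihat0_def by simp_all
    then show ?thesis using Xi0_subset_L0_if_NA2[OF NA2 order_refl] by blast
  next
    case False
    then have "x \<in> rv_plus (L0 M (F t) (K t)) (cl0 M (Xi0 M F K T (Suc t) \<inter> L0 M (F t) (\<lambda>_. UNIV)))"
      using x unfolding Xihat0_def by simp
    then obtain k Y where k: "k \<in> L0 M (F t) (K t)"
      and Y: "Y \<in> cl0 M (Xi0 M F K T (Suc t) \<inter> L0 M (F t) (\<lambda>_. UNIV))"
      and x_eq: "x = (\<lambda>\<omega>. k \<omega> + Y \<omega>)"
      unfolding rv_plus_def by blast
    have "x \<in> borel_measurable (F t)" "k \<in> borel_measurable (F t)"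
      using x k unfolding L0_def by simp_all
    moreover have "Y = (\<lambda>\<omega>. x \<omega> - k \<omega>)" unfolding x_eq by simp
    ultimately have "Y \<in> borel_measurable (F t)" by simp
    moreover have "Suc t \<le> T" using False by simp
    ultimately have "Y \<in> L0 M (F t) (K t)"
      using cl0_Xi0_subset_L0_if_NA2[OF NA2 _ Y] by simp
    then show ?thesis unfolding x_eq by (rule L0_add[OF K_add[OF t] k])
  qed
qed

lemma SNR_if_NA2:
  assumes NA2: "NA2 M F K T" and t: "t \<le> T"
  shows "Xihat0 M F K T t \<inter> L0 M (F t) (negset (K t)) \<subseteq> L0 M (F t) (Kzero (K t))"
proof
  fix x assume x: "x \<in> Xihat0 M F K T t \<inter> L0 M (F t) (negset (K t))"
  then have "x \<in> Xihat0 M F K T t \<inter> L0 M (F t) (\<lambda>_. UNIV)" unfolding L0_def by simp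
  then have "x \<in> L0 M (F t) (K t)" by (rule subsetD[OF Xihat0_subset_L0_if_NA2[OF NA2 t]])
  then have "AE \<omega> in M. x \<omega> \<in> K t \<omega>" unfolding L0_def by simp
  moreover have "AE \<omega> in M. - x \<omega> \<in> K t \<omega>" using x unfolding L0_def by simp
  moreover have "AE \<omega> in M. cone (K t \<omega>)" using cones t by simp
  ultimately have "AE \<omega> in M. x \<omega> \<in> Kzero (K t) \<omega>"
    unfolding Kzero_def by eventually_elim (blast intro: cone_mem_scaleR_image_if_neg_mem)
  then show "x \<in> L0 M (F t) (Kzero (K t))" using x unfolding L0_def by simp
qed

end

theorem lemma7p2:
  fixes M :: "'a measure" and F :: "nat \<Rightarrow> 'a measure"
    and K :: "nat \<Rightarrow> 'a \<Rightarrow> (real^'d) set" and T :: nat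
  assumes setting: "market_setting M F K T"
    and cones: "\<forall>t\<le>T. AE \<omega> in M. cone (K t \<omega>)"
  shows "(NA2 M F K T \<longleftrightarrow> (\<forall>t\<le>T. Xi0 M F K T t = L0 M (F t) (K t)))
       \<and> (NA2 M F K T \<longleftrightarrow>
            (\<forall>t\<in>{1..T}. \<forall>Y. is_cond_core M (F (t - 1)) (K t) Y
                 \<longrightarrow> (AE \<omega> in M. Y \<omega> \<subseteq> K (t - 1) \<omega>)))
       \<and> (strictly_proper M K T \<longrightarrow> NA2 M F K T \<longrightarrow>
            (\<forall>t\<le>T. Xihat0 M F K T t \<inter> L0 M (F t) (negset (K t)) \<subseteq> L0 M (F t) (Kzero (K t))))"
proof -
  interpret conic_market M F K T
    using setting cones by (intro conic_market.intro market.intro conic_market_axioms.intro)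
  show ?thesis
    using NA2_iff_Xi0_eq NA2_iff_cond_core SNR_if_NA2 by blast
qed

end
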